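(* The set $\mathcal{M}^+(X)$ of fully-supported Borel probability measures on $X=A^{\mathbb{N}}$ is a complete metric space with respect to the projective distance \[ \rho(\mu,\nu)=\sup_{n\in\mathbb{N}}\max_{\pmb{a}\in A^n}\frac{1}{n}\left|\log\frac{\mu[\pmb{a}]}{\nu[\pmb{a}]}\right|. \]
   Context: $A$ is a finite alphabet and $X=A^{\mathbb{N}}$ carries the product (Tychonoff) topology and its Borel $\sigma$-algebra. For a word $\pmb{a}=a_1\cdots a_n\in A^n$, the cylinder set is $[\pmb{a}]=\{\pmb{x}\in X:\ x_1\cdots x_n=\pmb{a}\}$. $\mathcal{M}^+(X)$ denotes the set of Borel probability measures $\mu$ on $X$ with $\mu[\pmb{a}]>0$ for every finite word $\pmb{a}\in\bigcup_{n\in\mathbb{N}}A^n$.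
   Formalization: The projective distance $\rho$ takes values in [0, infinity] rather than in the reals, so $\mathcal{M}^+(X)$ is a complete extended metric space in which $\rho(\mu,\nu)$ may be infinite. The statement above fails without it. *)

theory Defs
  imports "HOL-Probability.Probability"
begin

text \<open>The shift space X = A^N over a finite alphabet, represented by the finite type 'a
  (so A = UNIV :: 'a set); sequences are indexed from 0, so x_1 ... x_n of the paper is
  x 0 ... x (n-1).\<close>

definition shift_topology :: "(nat \<Rightarrow> 'a::finite) topology" where
  "shift_topology = product_topology (\<lambda>_. discrete_topology (UNIV :: 'a set)) UNIV"

definition shift_borel :: "(nat \<Rightarrow> 'a::finite) measure" where
  "shift_borel = sigma (topspace shift_topology) {U. openin shift_topology U}"

definition cyl :: "'a list \<Rightarrow> (nat \<Rightarrow> 'a::finite) set" where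
  "cyl w = {x \<in> space shift_borel. \<forall>i<length w. x i = w ! i}"

definition Mplus :: "(nat \<Rightarrow> 'a::finite) measure set" where
  "Mplus = {\<mu>. prob_space \<mu> \<and> sets \<mu> = sets shift_borel \<and>
                 (\<forall>w::'a list. 0 < measure \<mu> (cyl w))}"

definition proj_dist :: "(nat \<Rightarrow> 'a::finite) measure \<Rightarrow> (nat \<Rightarrow> 'a) measure \<Rightarrow> ennreal" where
  "proj_dist \<mu> \<nu> =
     (SUP w \<in> {w::'a list. length w \<ge> 1}.
        ennreal (\<bar>ln (measure \<mu> (cyl w) / measure \<nu> (cyl w))\<bar> / real (length w)))"

definition is_metric_on :: "'b set \<Rightarrow> ('b \<Rightarrow> 'b \<Rightarrow> ennreal) \<Rightarrow> bool" where
  "is_metric_on S d \<longleftrightarrow>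
     (\<forall>x\<in>S. \<forall>y\<in>S. d x y = 0 \<longleftrightarrow> x = y) \<and>
     (\<forall>x\<in>S. \<forall>y\<in>S. d x y = d y x) \<and>
     (\<forall>x\<in>S. \<forall>y\<in>S. \<forall>z\<in>S. d x z \<le> d x y + d y z)"

definition is_complete_on :: "'b set \<Rightarrow> ('b \<Rightarrow> 'b \<Rightarrow> ennreal) \<Rightarrow> bool" where
  "is_complete_on S d \<longleftrightarrow>
     (\<forall>s::nat \<Rightarrow> 'b. range s \<subseteq> S \<longrightarrow>
        (\<forall>e>0. \<exists>N. \<forall>m\<ge>N. \<forall>k\<ge>N. d (s m) (s k) < e) \<longrightarrow>
        (\<exists>l\<in>S. \<forall>e>0. \<exists>N. \<forall>m\<ge>N. d (s m) l < e))"

end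

theory Submission
  imports Defs
begin

text \<open>A bound \<rho>(\<mu>,\<nu>) \<le> \<epsilon> says exactly that |log \<mu>[a] - log \<nu>[a]| \<le> \<epsilon> |a| for every word a.
  Hence along a \<rho>-Cauchy sequence the log-probabilities of each cylinder converge, uniformly
  up to a factor |a|. The limits p(a) are positive, p equals 1 on the empty word and p(a) is
  the sum of the p(ab) over letters b, so the Ionescu-Tulcea theorem, applied to the kernels
  b \<mapsto> p(ab)/p(a), yields a fully supported measure with these cylinder values; letting the
  second index go to infinity in the Cauchy estimate shows that the sequence converges to it.
  Definiteness of \<rho> is uniqueness of measures agreeing on the \<inter>-stable generator formed by
  the cylinders.\<close>

section \<open>Cylinders generate the Borel \<sigma>-algebra\<close>

lemma space_shift_borel [simp]: "space (shift_borel :: (nat \<Rightarrow> 'a::finite) measure) = UNIV"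
  by (auto simp: shift_borel_def shift_topology_def space_measure_of_conv dest: openin_subset)

lemma sets_shift_borel_eq_sigma_open:
  "sets (shift_borel :: (nat \<Rightarrow> 'a::finite) measure) = sigma_sets UNIV {U. openin shift_topology U}"
  by (auto simp: shift_borel_def shift_topology_def sets_measure_of_conv dest: openin_subset)

lemma cyl_eq: "cyl w = {x. \<forall>i<length w. x i = w ! i}"
  by (simp add: cyl_def)

lemma map_upt_eq_iff_in_cyl: "map x [0..<length w] = w \<longleftrightarrow> x \<in> cyl w"
  by (subst list_eq_iff_nth_eq) (simp add: cyl_eq)

lemma cyl_Nil [simp]: "cyl [] = UNIV"
  by (simp add: cyl_eq)

lemma openin_cyl: "openin shift_topology (cyl w)"
proof -
  have "cyl w = (\<Pi>\<^sub>E i\<in>UNIV. if i < length w then {w ! i} else UNIV)"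
    by (auto simp: cyl_eq PiE_iff split: if_splits)
  then show ?thesis
    unfolding shift_topology_def
    by (auto intro!: product_topology_basis intro: finite_subset[of _ "{..<length w}"])
qed

lemma openin_shift_topology_eq_Union_cyl:
  assumes "openin shift_topology (U :: (nat \<Rightarrow> 'a::finite) set)"
  shows "U = \<Union>(cyl ` {w. cyl w \<subseteq> U})"
proof (intro equalityI subsetI)
  fix x assume "x \<in> U"
  with assms obtain V where fin: "finite {i. V i \<noteq> UNIV}" and x: "x \<in> Pi\<^sub>E UNIV V"
      and VU: "Pi\<^sub>E UNIV V \<subseteq> U"
    unfolding shift_topology_def openin_product_topology_alt by auto
  obtain n where n: "\<And>i. V i \<noteq> UNIV \<Longrightarrow> i < n"
    using finite_nat_bounded[OF fin] by auto
  have "cyl (map x [0..<n]) \<subseteq> U"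
  proof
    fix y assume "y \<in> cyl (map x [0..<n])"
    then have "y i \<in> V i" for i
      using n[of i] x by (cases "V i = UNIV") (auto simp: cyl_eq PiE_iff)
    then show "y \<in> U"
      using VU by auto
  qed
  moreover have "x \<in> cyl (map x [0..<n])"
    by (simp add: cyl_eq)
  ultimately show "x \<in> \<Union>(cyl ` {w. cyl w \<subseteq> U})"
    by blast
qed auto

text \<open>Two cylinders are either disjoint or nested, so adding \<open>{}\<close> makes the family \<inter>-stable.\<close>
definition cyl_sets :: "(nat \<Rightarrow> 'a::finite) set set" where
  "cyl_sets = insert {} (range cyl)"

lemma Int_stable_cyl_sets: "Int_stable cyl_sets"
proof (rule Int_stableI)
  have "cyl v \<inter> cyl w \<in> cyl_sets" for v w :: "'a list"
  proof (cases "cyl v \<inter> cyl w = {}")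
    case False
    then obtain x where "x \<in> cyl v" "x \<in> cyl w"
      by blast
    then have "cyl v \<inter> cyl w = cyl (map x [0..<max (length v) (length w)])"
      by (auto simp: cyl_eq less_max_iff_disj)
    then show ?thesis
      by (simp add: cyl_sets_def)
  qed (simp add: cyl_sets_def)
  then show "A \<inter> B \<in> cyl_sets" if "A \<in> cyl_sets" "B \<in> cyl_sets" for A B :: "(nat \<Rightarrow> 'a) set"
    using that by (auto simp: cyl_sets_def)
qed

lemma sets_shift_borel_eq_sigma_cyl_sets:
  "sets (shift_borel :: (nat \<Rightarrow> 'a::finite) measure) = sigma_sets UNIV cyl_sets"
proof -
  interpret S: sigma_algebra UNIV "sigma_sets UNIV (cyl_sets :: (nat \<Rightarrow> 'a) set set)"
    by (rule sigma_algebra_sigma_sets) auto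
  have "U \<in> sigma_sets UNIV cyl_sets" if "openin shift_topology U" for U :: "(nat \<Rightarrow> 'a) set"
  proof -
    have "\<Union>(cyl ` {w. cyl w \<subseteq> U}) \<in> sigma_sets UNIV cyl_sets"
      by (intro S.countable_Union countable_image) (auto simp: cyl_sets_def)
    then show ?thesis
      using openin_shift_topology_eq_Union_cyl[OF that] by simp
  qed
  then have "sigma_sets UNIV {U. openin shift_topology U} \<subseteq> sigma_sets UNIV (cyl_sets :: (nat \<Rightarrow> 'a) set set)"
    by (intro S.sigma_sets_subset) auto
  moreover have "sigma_sets UNIV cyl_sets \<subseteq> sigma_sets UNIV {U. openin shift_topology (U :: (nat \<Rightarrow> 'a) set)}"
    by (rule sigma_sets_mono) (auto simp: cyl_sets_def openin_cyl)
  ultimately show ?thesis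
    by (simp add: sets_shift_borel_eq_sigma_open)
qed

lemma sets_shift_borel_eq_PiM:
  "sets (shift_borel :: (nat \<Rightarrow> 'a::finite) measure) = sets (Pi\<^sub>M UNIV (\<lambda>_. count_space UNIV))"
proof
  show "sets (Pi\<^sub>M UNIV (\<lambda>_. count_space UNIV)) \<subseteq> sets (shift_borel :: (nat \<Rightarrow> 'a) measure)"
    unfolding sets_PiM_single sets_shift_borel_eq_sigma_open space_count_space PiE_UNIV
  proof (rule sigma_sets_mono', safe)
    fix i :: nat and A :: "'a set"
    have "{f. f i \<in> A} = (\<Pi>\<^sub>E j\<in>UNIV. if j = i then A else UNIV)"
      by (auto simp: PiE_iff split: if_splits)
    then show "openin shift_topology {f \<in> UNIV. f i \<in> A}"
      unfolding shift_topology_def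
      by (auto intro!: product_topology_basis intro: finite_subset[of _ "{i}"])
  qed
  have "cyl w \<in> sets (Pi\<^sub>M UNIV (\<lambda>_. count_space (UNIV :: 'a set)))" for w
  proof -
    have "cyl w = {x \<in> space (Pi\<^sub>M UNIV (\<lambda>_. count_space UNIV)). \<forall>i\<in>{..<length w}. x i = w ! i}"
      by (auto simp: cyl_eq space_PiM)
    also have "\<dots> \<in> sets (Pi\<^sub>M UNIV (\<lambda>_. count_space UNIV))"
      by measurable
    finally show ?thesis .
  qed
  then show "sets (shift_borel :: (nat \<Rightarrow> 'a) measure) \<subseteq> sets (Pi\<^sub>M UNIV (\<lambda>_. count_space UNIV))"
    unfolding sets_shift_borel_eq_sigma_cyl_sets
    by (intro sets.sigma_sets_subset') (auto simp: cyl_sets_def, metis cyl_Nil)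
qed

lemma cyl_in_sets: "sets \<mu> = sets shift_borel \<Longrightarrow> cyl w \<in> sets \<mu>"
  by (simp add: sets_shift_borel_eq_sigma_cyl_sets cyl_sets_def)

lemma measure_eqI_cyl:
  assumes "finite_measure \<mu>" "finite_measure \<nu>"
    and sets: "sets \<mu> = sets shift_borel" "sets \<nu> = sets shift_borel"
    and eq: "\<And>w. measure \<mu> (cyl w) = measure \<nu> (cyl w)"
  shows "\<mu> = \<nu>"
proof (rule measure_eqI_generator_eq[OF Int_stable_cyl_sets, where \<Omega>=UNIV and A="\<lambda>_. UNIV"])
  show "emeasure \<mu> X = emeasure \<nu> X" if "X \<in> cyl_sets" for X
    using that eq assms(1,2) by (auto simp: cyl_sets_def finite_measure.emeasure_eq_measure)
  have "space \<mu> = UNIV"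
    using sets_eq_imp_space_eq[OF sets(1)] by simp
  then show "emeasure \<mu> UNIV \<noteq> \<infinity>"
    using finite_measure.emeasure_finite[OF assms(1), of UNIV] by simp
  have "UNIV \<in> cyl_sets"
    unfolding cyl_sets_def by (metis cyl_Nil insertCI rangeI)
  then show "range (\<lambda>_. UNIV) \<subseteq> cyl_sets"
    by simp
qed (auto simp: sets sets_shift_borel_eq_sigma_cyl_sets)

lemma cyl_eq_UN_snoc: "cyl w = (\<Union>a. cyl (w @ [a]))"
proof (intro equalityI subsetI)
  fix x assume "x \<in> cyl w"
  then have "x \<in> cyl (w @ [x (length w)])"
    by (auto simp: cyl_eq nth_append less_Suc_eq)
  then show "x \<in> (\<Union>a. cyl (w @ [a]))"
    by blast
qed (auto simp: cyl_eq nth_append)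

lemma disjoint_family_cyl_snoc: "disjoint_family (\<lambda>a. cyl (w @ [a]))"
  unfolding disjoint_family_on_def
  by (auto simp: cyl_eq nth_append dest!: spec[of _ "length w"])

lemma measure_cyl_eq_sum_snoc:
  assumes "finite_measure \<mu>" "sets \<mu> = sets shift_borel"
  shows "measure \<mu> (cyl w) = (\<Sum>a\<in>UNIV. measure \<mu> (cyl (w @ [a :: 'a::finite])))"
proof -
  have "measure \<mu> (\<Union>a. cyl (w @ [a])) = (\<Sum>a\<in>UNIV. measure \<mu> (cyl (w @ [a])))"
    by (rule measure_finite_Union)
      (auto simp: disjoint_family_cyl_snoc cyl_in_sets assms finite_measure.emeasure_finite)
  then show ?thesis
    by (simp flip: cyl_eq_UN_snoc)
qed

section \<open>Measures with prescribed cylinder probabilities\<close>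

lemma sets_PiM_count_space_finite:
  assumes "finite I"
  shows "sets (Pi\<^sub>M I (\<lambda>_. count_space (UNIV :: 'a::finite set))) =
    Pow (space (Pi\<^sub>M I (\<lambda>_. count_space UNIV)))"
proof (intro equalityI subsetI)
  fix S assume S: "S \<in> Pow (space (Pi\<^sub>M I (\<lambda>_. count_space (UNIV :: 'a set))))"
  then have S_ext: "S \<subseteq> extensional I"
    by (auto simp: space_PiM PiE_def)
  have "finite (\<Pi>\<^sub>E i\<in>I. UNIV :: 'a set)"
    by (simp add: finite_PiE assms)
  then have "finite S"
    using S by (auto simp: space_PiM intro: finite_subset)
  then have "(\<Union>x\<in>S. \<Pi>\<^sub>E i\<in>I. {x i}) \<in> sets (Pi\<^sub>M I (\<lambda>_. count_space UNIV))"
    by (intro sets.finite_UN sets_PiM_I_finite assms) auto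
  moreover have "(\<Union>x\<in>S. \<Pi>\<^sub>E i\<in>I. {x i}) = (\<Union>x\<in>S. {x})"
    using S_ext by (intro SUP_cong refl PiE_singleton) auto
  ultimately show "S \<in> sets (Pi\<^sub>M I (\<lambda>_. count_space UNIV))"
    by simp
qed (use sets.sets_into_space in blast)

locale cyl_consistent =
  fixes p :: "'a::finite list \<Rightarrow> real"
  assumes pos: "\<And>w. 0 < p w"
    and Nil: "p [] = 1"
    and sum_snoc: "\<And>w. p w = (\<Sum>a\<in>UNIV. p (w @ [a]))"
begin

definition next_letter :: "'a list \<Rightarrow> 'a pmf" where
  "next_letter w = embed_pmf (\<lambda>a. p (w @ [a]) / p w)"

lemma pmf_next_letter: "pmf (next_letter w) a = p (w @ [a]) / p w"
proof -
  have nonneg: "0 \<le> p (w @ [a]) / p w" for a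
    using pos[of w] pos[of "w @ [a]"] by simp
  have "(\<Sum>a\<in>UNIV. p (w @ [a]) / p w) = 1"
    using pos[of w] by (simp flip: sum_divide_distrib sum_snoc)
  then have "(\<integral>\<^sup>+a. ennreal (p (w @ [a]) / p w) \<partial>count_space UNIV) = 1"
    by (simp add: nn_integral_count_space_finite nonneg sum_ennreal)
  then show ?thesis
    unfolding next_letter_def by (simp add: pmf_embed_pmf nonneg)
qed

lemma measurable_next_letter:
  "(\<lambda>x. measure_pmf (next_letter (map x [0..<n])))
    \<in> measurable (Pi\<^sub>M {0..<n} (\<lambda>_. count_space UNIV)) (subprob_algebra (count_space UNIV))"
proof -
  have sets_eq: "sets (Pi\<^sub>M {0..<n} (\<lambda>_. count_space UNIV)) =
      sets (count_space (space (Pi\<^sub>M {0..<n} (\<lambda>_. count_space (UNIV :: 'a set)))))"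
    by (simp add: sets_PiM_count_space_finite)
  show ?thesis
    unfolding measurable_cong_sets[OF sets_eq refl]
    by (auto simp: measurable_count_space_eq1 space_subprob_algebra
        intro: prob_space_imp_subprob_space prob_space_measure_pmf)
qed

sublocale IT: Ionescu_Tulcea "\<lambda>n x. measure_pmf (next_letter (map x [0..<n]))" "\<lambda>_. count_space UNIV"
  by unfold_locales (auto simp: measurable_next_letter prob_space_measure_pmf)

definition prefix_set :: "nat \<Rightarrow> 'a list \<Rightarrow> (nat \<Rightarrow> 'a) set" where
  "prefix_set n w = {x \<in> space (Pi\<^sub>M {0..<n} (\<lambda>_. count_space UNIV)). map x [0..<n] = w}"

lemma prefix_set_in_sets: "prefix_set n w \<in> sets (Pi\<^sub>M {0..<n} (\<lambda>_. count_space UNIV))"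
  by (auto simp: sets_PiM_count_space_finite prefix_set_def)

lemma emeasure_C_prefix_set:
  "length w = n \<Longrightarrow> emeasure (IT.C 0 n (\<lambda>_. undefined)) (prefix_set n w) = p w"
proof (induction n arbitrary: w)
  case 0
  then show ?case
    using prefix_set_in_sets[of 0 "[]"] by (simp add: prefix_set_def space_PiM Nil)
next
  case (Suc n)
  then obtain v a where w: "w = v @ [a]" and v: "length v = n"
    by (metis length_Suc_conv_rev)
  let ?C = "IT.C 0 n (\<lambda>_. undefined)"
  have space_C: "space ?C = space (Pi\<^sub>M {0..<n} (\<lambda>_. count_space UNIV))"
    by (simp add: IT.space_C space_PiM)
  have "emeasure (?C \<bind> IT.eP n) (prefix_set (Suc n) w) =
      (\<integral>\<^sup>+y. emeasure (IT.eP n y) (prefix_set (Suc n) w) \<partial>?C)"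
  proof (rule emeasure_bind[OF _ _ prefix_set_in_sets])
    show "space ?C \<noteq> {}"
      by (simp add: space_C space_PiM PiE_eq_empty_iff)
    show "IT.eP n \<in> ?C \<rightarrow>\<^sub>M subprob_algebra (Pi\<^sub>M {0..<Suc n} (\<lambda>_. count_space UNIV))"
      by (simp add: measurable_cong_sets[OF IT.sets_C refl] space_PiM)
  qed
  also have "\<dots> = (\<integral>\<^sup>+y. ennreal (p w / p v) * indicator (prefix_set n v) y \<partial>?C)"
  proof (rule nn_integral_cong)
    fix y assume "y \<in> space ?C"
    then have y: "y \<in> space (Pi\<^sub>M {0..<n} (\<lambda>_. count_space UNIV))"
      by (simp add: space_C)
    have "(\<lambda>b. y(n := b)) -` prefix_set (Suc n) w = (if map y [0..<n] = v then {a} else {})"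
      using y by (auto simp: prefix_set_def w space_PiM atLeast0_lessThan_Suc intro!: PiE_fun_upd)
    then have "emeasure (IT.eP n y) (prefix_set (Suc n) w) =
        emeasure (next_letter (map y [0..<n])) (if map y [0..<n] = v then {a} else {})"
      using IT.emeasure_eP[OF y prefix_set_in_sets] by simp
    then show "emeasure (IT.eP n y) (prefix_set (Suc n) w) = ennreal (p w / p v) * indicator (prefix_set n v) y"
      using y by (simp add: emeasure_pmf_single pmf_next_letter prefix_set_def w)
  qed
  also have "\<dots> = ennreal (p w / p v) * emeasure ?C (prefix_set n v)"
    by (rule nn_integral_cmult_indicator) (simp add: IT.sets_C space_PiM prefix_set_in_sets)
  also have "\<dots> = p w"
    using Suc.IH[OF v] pos[of v] pos[of w] by (simp flip: ennreal_mult)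
  finally show ?case
    by simp
qed

lemma emeasure_lim_cyl: "emeasure IT.PF.lim (cyl w) = p w"
proof -
  let ?n = "length w"
  have restrict: "map (restrict x {0..<?n}) [0..<?n] = map x [0..<?n]" for x :: "nat \<Rightarrow> 'a"
    by (intro map_cong) auto
  have "cyl w = IT.PF.emb UNIV {0..<?n} (prefix_set ?n w)"
    by (auto simp: prod_emb_def prefix_set_def space_PiM restrict simp flip: map_upt_eq_iff_in_cyl)
  then have "emeasure IT.PF.lim (cyl w) = emeasure (IT.CI {0..<?n}) (prefix_set ?n w)"
    using IT.lim[OF _ prefix_set_in_sets] by simp
  also have "\<dots> = emeasure (IT.C 0 ?n (\<lambda>_. undefined)) (IT.PF.emb {0..<?n} {0..<?n} (prefix_set ?n w))"
    by (rule IT.emeasure_CI[OF subset_refl prefix_set_in_sets])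
  also have "IT.PF.emb {0..<?n} {0..<?n} (prefix_set ?n w) = prefix_set ?n w"
    using sets.sets_into_space[OF prefix_set_in_sets] by (intro prod_emb_id) (simp add: space_PiM)
  finally show ?thesis
    by (simp add: emeasure_C_prefix_set)
qed

lemma ex_Mplus_measure_cyl_eq: "\<exists>\<mu>\<in>Mplus. \<forall>w. measure \<mu> (cyl w) = p w"
proof (intro bexI allI)
  show "measure IT.PF.lim (cyl w) = p w" for w
    using pos[of w] by (simp add: measure_def emeasure_lim_cyl less_imp_le)
  have "prob_space IT.PF.lim"
    using emeasure_lim_cyl[of "[]"] by (intro prob_spaceI) (simp add: space_PiM Nil)
  then show "IT.PF.lim \<in> Mplus"
    using pos by (simp add: Mplus_def sets_shift_borel_eq_PiM measure_def emeasure_lim_cyl less_imp_le)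
qed

end

section \<open>The projective distance\<close>

lemma Mplus_finite_measure: "\<mu> \<in> Mplus \<Longrightarrow> finite_measure \<mu>"
  by (simp add: Mplus_def prob_space.finite_measure)

lemma Mplus_measure_UNIV:
  assumes "\<mu> \<in> Mplus"
  shows "measure \<mu> UNIV = 1"
proof -
  have "space \<mu> = UNIV"
    using assms sets_eq_imp_space_eq[of \<mu> shift_borel] by (simp add: Mplus_def)
  then show ?thesis
    using assms prob_space.prob_space[of \<mu>] by (simp add: Mplus_def)
qed

definition log_cyl :: "(nat \<Rightarrow> 'a::finite) measure \<Rightarrow> 'a list \<Rightarrow> real" where
  "log_cyl \<mu> w = ln (measure \<mu> (cyl w))"

lemma log_cyl_Nil: "\<mu> \<in> Mplus \<Longrightarrow> log_cyl \<mu> [] = 0"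
  by (simp add: log_cyl_def Mplus_measure_UNIV)

lemma exp_log_cyl: "\<mu> \<in> Mplus \<Longrightarrow> exp (log_cyl \<mu> w) = measure \<mu> (cyl w)"
  by (simp add: log_cyl_def Mplus_def)

lemma Mplus_eq_iff_log_cyl:
  assumes "\<mu> \<in> Mplus" "\<nu> \<in> Mplus"
  shows "\<mu> = \<nu> \<longleftrightarrow> (\<forall>w. log_cyl \<mu> w = log_cyl \<nu> w)"
proof
  assume "\<forall>w. log_cyl \<mu> w = log_cyl \<nu> w"
  then have "measure \<mu> (cyl w) = measure \<nu> (cyl w)" for w
    using exp_log_cyl[OF assms(1)] exp_log_cyl[OF assms(2)] by metis
  then show "\<mu> = \<nu>"
    using assms by (intro measure_eqI_cyl) (auto simp: Mplus_finite_measure Mplus_def)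
qed simp

lemma proj_dist_eq_SUP_log_cyl:
  assumes "\<mu> \<in> Mplus" "\<nu> \<in> Mplus"
  shows "proj_dist \<mu> \<nu> =
    (SUP w \<in> {w. 1 \<le> length w}. ennreal (\<bar>log_cyl \<mu> w - log_cyl \<nu> w\<bar> / length w))"
  unfolding proj_dist_def log_cyl_def using assms by (intro SUP_cong refl) (simp add: Mplus_def ln_divide_pos)

lemma log_cyl_diff_le_proj_dist:
  assumes "\<mu> \<in> Mplus" "\<nu> \<in> Mplus" "1 \<le> length w"
  shows "ennreal (\<bar>log_cyl \<mu> w - log_cyl \<nu> w\<bar> / length w) \<le> proj_dist \<mu> \<nu>"
  unfolding proj_dist_eq_SUP_log_cyl[OF assms(1,2)] using assms(3) by (rule SUP_upper[OF CollectI])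

lemma proj_dist_le_iff:
  assumes "\<mu> \<in> Mplus" "\<nu> \<in> Mplus" "0 \<le> e"
  shows "proj_dist \<mu> \<nu> \<le> ennreal e \<longleftrightarrow> (\<forall>w. \<bar>log_cyl \<mu> w - log_cyl \<nu> w\<bar> \<le> e * length w)"
proof -
  have "ennreal (\<bar>log_cyl \<mu> w - log_cyl \<nu> w\<bar> / length w) \<le> ennreal e \<longleftrightarrow>
      \<bar>log_cyl \<mu> w - log_cyl \<nu> w\<bar> \<le> e * length w" if "w \<noteq> []" for w
    using that assms(3) by (simp add: pos_divide_le_eq)
  moreover have "1 \<le> length w \<longleftrightarrow> w \<noteq> []" for w :: "'a list"
    by (cases w) auto
  ultimately have "proj_dist \<mu> \<nu> \<le> ennreal e \<longleftrightarrow>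
      (\<forall>w. w \<noteq> [] \<longrightarrow> \<bar>log_cyl \<mu> w - log_cyl \<nu> w\<bar> \<le> e * length w)"
    by (simp add: proj_dist_eq_SUP_log_cyl assms SUP_le_iff)
  also have "\<dots> \<longleftrightarrow> (\<forall>w. \<bar>log_cyl \<mu> w - log_cyl \<nu> w\<bar> \<le> e * length w)"
    using assms(1,2) log_cyl_Nil[of \<mu>] log_cyl_Nil[of \<nu>] by (metis abs_zero diff_self list.size(3) mult_zero_right of_nat_0 order_refl)
  finally show ?thesis .
qed

lemma is_metric_on_Mplus_proj_dist: "is_metric_on Mplus proj_dist"
  unfolding is_metric_on_def
proof (intro conjI ballI)
  fix \<mu> \<nu> \<eta> :: "(nat \<Rightarrow> 'a) measure" assume \<mu>: "\<mu> \<in> Mplus" and \<nu>: "\<nu> \<in> Mplus" and \<eta>: "\<eta> \<in> Mplus"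
  show "proj_dist \<mu> \<nu> = 0 \<longleftrightarrow> \<mu> = \<nu>"
    using proj_dist_le_iff[OF \<mu> \<nu>, of 0] by (simp add: Mplus_eq_iff_log_cyl[OF \<mu> \<nu>])
  show "proj_dist \<mu> \<nu> = proj_dist \<nu> \<mu>"
    by (simp add: proj_dist_eq_SUP_log_cyl \<mu> \<nu> abs_minus_commute)
  show "proj_dist \<mu> \<eta> \<le> proj_dist \<mu> \<nu> + proj_dist \<nu> \<eta>"
    unfolding proj_dist_eq_SUP_log_cyl[OF \<mu> \<eta>]
  proof (rule SUP_least)
    fix w :: "'a list" assume w: "w \<in> {w. 1 \<le> length w}"
    have "\<bar>log_cyl \<mu> w - log_cyl \<eta> w\<bar> / length w \<le>
        \<bar>log_cyl \<mu> w - log_cyl \<nu> w\<bar> / length w + \<bar>log_cyl \<nu> w - log_cyl \<eta> w\<bar> / length w"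
      by (simp add: divide_right_mono flip: add_divide_distrib)
    then have "ennreal (\<bar>log_cyl \<mu> w - log_cyl \<eta> w\<bar> / length w) \<le>
        ennreal (\<bar>log_cyl \<mu> w - log_cyl \<nu> w\<bar> / length w) + ennreal (\<bar>log_cyl \<nu> w - log_cyl \<eta> w\<bar> / length w)"
      by (simp add: ennreal_leI flip: ennreal_plus)
    also have "\<dots> \<le> proj_dist \<mu> \<nu> + proj_dist \<nu> \<eta>"
      using w by (intro add_mono log_cyl_diff_le_proj_dist \<mu> \<nu> \<eta>) auto
    finally show "ennreal (\<bar>log_cyl \<mu> w - log_cyl \<eta> w\<bar> / length w) \<le> proj_dist \<mu> \<nu> + proj_dist \<nu> \<eta>" .
  qed
qed

lemma proj_dist_Cauchy_imp_log_cyl_uniform: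
  fixes e :: real
  assumes "range s \<subseteq> Mplus" and "\<forall>e>0. \<exists>N. \<forall>m\<ge>N. \<forall>k\<ge>N. proj_dist (s m) (s k) < e"
    and "0 < e"
  shows "\<exists>N. \<forall>m\<ge>N. \<forall>k\<ge>N. \<forall>w. \<bar>log_cyl (s m) w - log_cyl (s k) w\<bar> \<le> e * length w"
proof -
  obtain N where "\<forall>m\<ge>N. \<forall>k\<ge>N. proj_dist (s m) (s k) < ennreal e"
    using assms(2,3) by (meson ennreal_less_zero_iff)
  then show ?thesis
    using assms(1,3) by (metis less_imp_le proj_dist_le_iff range_subsetD)
qed

lemma proj_dist_Cauchy_imp_convergent_log_cyl:
  assumes "range s \<subseteq> Mplus" and "\<forall>e>0. \<exists>N. \<forall>m\<ge>N. \<forall>k\<ge>N. proj_dist (s m) (s k) < e"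
  shows "convergent (\<lambda>m. log_cyl (s m) w)"
  unfolding Cauchy_convergent_iff[symmetric]
proof (rule metric_CauchyI)
  fix e :: real assume "0 < e"
  then obtain N where N: "\<forall>m\<ge>N. \<forall>k\<ge>N. \<bar>log_cyl (s m) w - log_cyl (s k) w\<bar> \<le> e / (real (length w) + 1) * length w"
    using proj_dist_Cauchy_imp_log_cyl_uniform[OF assms, of "e / (real (length w) + 1)"] by auto
  have "e / (real (length w) + 1) * length w < e"
    using \<open>0 < e\<close> by (simp add: field_simps)
  then show "\<exists>N. \<forall>m\<ge>N. \<forall>k\<ge>N. dist (log_cyl (s m) w) (log_cyl (s k) w) < e"
    using N by (metis dist_real_def le_less_trans)
qed

lemma eventually_less_if_eventually_le_ennreal:
  fixes f :: "nat \<Rightarrow> ennreal"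
  assumes "\<And>r. 0 < r \<Longrightarrow> \<exists>N. \<forall>m\<ge>N. f m \<le> ennreal r" and "0 < e"
  shows "\<exists>N. \<forall>m\<ge>N. f m < e"
proof -
  obtain d where d: "0 < d" "d < e"
    using dense[OF \<open>0 < e\<close>] by blast
  then obtain r where "d = ennreal r" "0 < r"
    by (cases d) (auto simp: top_unique)
  with d assms(1) show ?thesis
    by (meson le_less_trans)
qed

lemma is_complete_on_Mplus_proj_dist: "is_complete_on Mplus proj_dist"
  unfolding is_complete_on_def
proof (intro allI impI)
  fix s :: "nat \<Rightarrow> (nat \<Rightarrow> 'a) measure"
  assume s: "range s \<subseteq> Mplus" and Cauchy: "\<forall>e>0. \<exists>N. \<forall>m\<ge>N. \<forall>k\<ge>N. proj_dist (s m) (s k) < e"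
  have s_Mplus: "s m \<in> Mplus" for m
    using s by auto
  define L where "L w = lim (\<lambda>m. log_cyl (s m) w)" for w
  have L: "(\<lambda>m. log_cyl (s m) w) \<longlonglongrightarrow> L w" for w
    using proj_dist_Cauchy_imp_convergent_log_cyl[OF s Cauchy] by (simp add: L_def convergent_LIMSEQ_iff)
  have measure_lim: "(\<lambda>m. measure (s m) (cyl w)) \<longlonglongrightarrow> exp (L w)" for w
    using tendsto_exp[OF L] by (simp add: exp_log_cyl s_Mplus)
  have "cyl_consistent (\<lambda>w. exp (L w))"
  proof
    show "exp (L []) = 1"
      using LIMSEQ_unique[OF L[of "[]"]] by (simp add: log_cyl_Nil s_Mplus)
    fix w :: "'a list"
    have "(\<Sum>a\<in>UNIV. measure (s m) (cyl (w @ [a]))) = measure (s m) (cyl w)" for m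
      using s_Mplus[of m]
      by (intro measure_cyl_eq_sum_snoc[symmetric]) (simp_all add: Mplus_finite_measure Mplus_def)
    moreover have "(\<lambda>m. \<Sum>a\<in>UNIV. measure (s m) (cyl (w @ [a]))) \<longlonglongrightarrow> (\<Sum>a\<in>UNIV. exp (L (w @ [a])))"
      by (intro tendsto_sum measure_lim)
    ultimately show "exp (L w) = (\<Sum>a\<in>UNIV. exp (L (w @ [a])))"
      using LIMSEQ_unique[OF measure_lim[of w]] by simp
  qed simp
  then obtain \<mu> where \<mu>: "\<mu> \<in> Mplus" and "\<forall>w. measure \<mu> (cyl w) = exp (L w)"
    using cyl_consistent.ex_Mplus_measure_cyl_eq by blast
  then have log_cyl_\<mu>: "log_cyl \<mu> w = L w" for w
    by (simp add: log_cyl_def)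
  have le: "\<exists>N. \<forall>m\<ge>N. proj_dist (s m) \<mu> \<le> ennreal e" if "0 < e" for e
  proof -
    obtain N where N: "\<forall>m\<ge>N. \<forall>k\<ge>N. \<forall>w. \<bar>log_cyl (s m) w - log_cyl (s k) w\<bar> \<le> e * length w"
      using proj_dist_Cauchy_imp_log_cyl_uniform[OF s Cauchy \<open>0 < e\<close>] by blast
    have "\<bar>log_cyl (s m) w - L w\<bar> \<le> e * length w" if "N \<le> m" for m w
      using N that
      by (intro LIMSEQ_le_const2[OF tendsto_rabs[OF tendsto_diff[OF tendsto_const L]]]) auto
    then show ?thesis
      using \<open>0 < e\<close> by (auto simp: proj_dist_le_iff s_Mplus \<mu> log_cyl_\<mu>)
  qed
  have "\<exists>N. \<forall>m\<ge>N. proj_dist (s m) \<mu> < e" if "0 < e" for e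
    by (rule eventually_less_if_eventually_le_ennreal[OF le that])
  with \<mu> show "\<exists>l\<in>Mplus. \<forall>e>0. \<exists>N. \<forall>m\<ge>N. proj_dist (s m) l < e"
    by blast
qed

theorem theorem2p1:
  shows "is_metric_on (Mplus :: (nat \<Rightarrow> 'a::finite) measure set) proj_dist \<and>
         is_complete_on (Mplus :: (nat \<Rightarrow> 'a::finite) measure set) proj_dist"
  using is_metric_on_Mplus_proj_dist is_complete_on_Mplus_proj_dist by blast

end
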